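(* Let $(F,v)$ be a valued field and $\varphi=(V,q)$ a quadratic space over $F$. If $\varphi$ admits a $v$-norm compatible with $q$ of depth $\delta\ge0$, then for every $\gamma\in\Gamma$ with $\gamma>\delta$ it also admits a $v$-norm compatible with $q$ of depth $\gamma$.
   Context: $F$ has a valuation $v\colon F\to\Gamma\cup\{\infty\}$, $\Gamma$ a divisible totally ordered abelian group. A $v$-norm on a finite-dimensional $F$-space $V$ is $\alpha\colon V\to\Gamma\cup\{\infty\}$ with $\alpha(x)=\infty\iff x=0$, $\alpha(\lambda x)=v(\lambda)+\alpha(x)$, $\alpha(x+y)\ge\min(\alpha(x),\alpha(y))$, admitting a basis $(e_i)$ with $\alpha(\sum\lambda_ie_i)=\min\alpha(\lambda_ie_i)$. For $\varepsilon\ge0$, $\alpha$ is compatible of depth $\varepsilon$ with $q$ (polar form $b_q(x,y)=q(x+y)-q(x)-q(y)$) if (a) $v(b_q(x,y))\ge\alpha(x)+\alpha(y)+\varepsilon$ for all $x,y$; (b) $v(q(x))\ge2\alpha(x)$ for all $x$; (c) for every $x\ne0$ there is $y\ne0$ with $v(b_q(x,y))=\alpha(x)+\alpha(y)+\varepsilon$. *)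

theory Defs
  imports Complex_Main
begin

datatype 'g extg = Fin 'g | Infty

instantiation extg :: (linorder) linorder
begin
fun less_eq_extg :: "'a extg \<Rightarrow> 'a extg \<Rightarrow> bool" where
  "less_eq_extg (Fin a) (Fin b) = (a \<le> b)"
| "less_eq_extg _ Infty = True"
| "less_eq_extg Infty (Fin _) = False"
definition less_extg :: "'a extg \<Rightarrow> 'a extg \<Rightarrow> bool" where
  "less_extg x y = (x \<le> y \<and> \<not> y \<le> x)"
instance
proof
  fix x y z :: "'a extg"
  show "(x < y) = (x \<le> y \<and> \<not> y \<le> x)" by (simp add: less_extg_def)
  show "x \<le> x" by (cases x) auto
  show "x \<le> y \<Longrightarrow> y \<le> z \<Longrightarrow> x \<le> z"
    by (cases x; cases y; cases z) auto
  show "x \<le> y \<Longrightarrow> y \<le> x \<Longrightarrow> x = y"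
    by (cases x; cases y) auto
  show "x \<le> y \<or> y \<le> x" by (cases x; cases y) auto
qed
end

instantiation extg :: (plus) plus
begin
fun plus_extg :: "'a extg \<Rightarrow> 'a extg \<Rightarrow> 'a extg" where
  "plus_extg (Fin a) (Fin b) = Fin (a + b)"
| "plus_extg _ _ = Infty"
instance ..
end

definition divisible_group :: "'g::ab_group_add itself \<Rightarrow> bool" where
  "divisible_group _ \<longleftrightarrow> (\<forall>x::'g. \<forall>n::nat. n > 0 \<longrightarrow> (\<exists>y. (\<Sum>i<n. y) = x))"

definition valuation :: "('a::field \<Rightarrow> 'g::linordered_ab_group_add extg) \<Rightarrow> bool" where
  "valuation v \<longleftrightarrow>
     (\<forall>x. v x = Infty \<longleftrightarrow> x = 0) \<and>
     (\<forall>x y. v (x * y) = v x + v y) \<and>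
     (\<forall>x y. v (x + y) \<ge> min (v x) (v y))"

definition finite_dim :: "('a::field \<Rightarrow> 'v::ab_group_add \<Rightarrow> 'v) \<Rightarrow> bool" where
  "finite_dim scale \<longleftrightarrow> (\<exists>B. finite B \<and> module.span scale B = UNIV)"

definition is_basis :: "('a::field \<Rightarrow> 'v::ab_group_add \<Rightarrow> 'v) \<Rightarrow> 'v set \<Rightarrow> bool" where
  "is_basis scale B \<longleftrightarrow> finite B \<and> \<not> module.dependent scale B \<and> module.span scale B = UNIV"

definition polar :: "('v::ab_group_add \<Rightarrow> 'a::field) \<Rightarrow> 'v \<Rightarrow> 'v \<Rightarrow> 'a" where
  "polar q x y = q (x + y) - q x - q y"

definition quadratic_form :: "('a::field \<Rightarrow> 'v::ab_group_add \<Rightarrow> 'v) \<Rightarrow> ('v \<Rightarrow> 'a) \<Rightarrow> bool" where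
  "quadratic_form scale q \<longleftrightarrow>
     (\<forall>a x. q (scale a x) = a * a * q x) \<and>
     (\<forall>x y z. polar q (x + y) z = polar q x z + polar q y z) \<and>
     (\<forall>a x y. polar q (scale a x) y = a * polar q x y)"

text \<open>v-norm; the minimum over the basis is taken with \<infinity> inserted, so that the empty
  basis (V = 0) gives \<infinity>; for nonempty bases this is the usual minimum.\<close>
definition v_norm ::
  "('a::field \<Rightarrow> 'g::linordered_ab_group_add extg) \<Rightarrow> ('a \<Rightarrow> 'v::ab_group_add \<Rightarrow> 'v)
     \<Rightarrow> ('v \<Rightarrow> 'g extg) \<Rightarrow> bool" where
  "v_norm v scale \<alpha> \<longleftrightarrow>
     (\<forall>x. \<alpha> x = Infty \<longleftrightarrow> x = 0) \<and>
     (\<forall>a x. \<alpha> (scale a x) = v a + \<alpha> x) \<and>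
     (\<forall>x y. \<alpha> (x + y) \<ge> min (\<alpha> x) (\<alpha> y)) \<and>
     (\<exists>B. is_basis scale B \<and>
        (\<forall>c. \<alpha> (\<Sum>e\<in>B. scale (c e) e) = Min (insert Infty ((\<lambda>e. \<alpha> (scale (c e) e)) ` B))))"

definition compatible_depth ::
  "('a::field \<Rightarrow> 'g::linordered_ab_group_add extg) \<Rightarrow> ('v::ab_group_add \<Rightarrow> 'a)
     \<Rightarrow> ('v \<Rightarrow> 'g extg) \<Rightarrow> 'g \<Rightarrow> bool" where
  "compatible_depth v q \<alpha> \<epsilon> \<longleftrightarrow>
     (\<forall>x y. v (polar q x y) \<ge> \<alpha> x + \<alpha> y + Fin \<epsilon>) \<and>
     (\<forall>x. v (q x) \<ge> \<alpha> x + \<alpha> x) \<and>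
     (\<forall>x. x \<noteq> 0 \<longrightarrow> (\<exists>y. y \<noteq> 0 \<and> v (polar q x y) = \<alpha> x + \<alpha> y + Fin \<epsilon>))"

end

theory Submission
  imports Defs
begin

text \<open>Adding a constant \<open>k\<close> to a \<open>v\<close>-norm gives again a \<open>v\<close>-norm, and it changes
  \<open>\<alpha> x + \<alpha> y + \<epsilon>\<close> into \<open>\<alpha> x + \<alpha> y + 2k + \<epsilon>\<close>. Taking \<open>2k = \<delta> - \<gamma>\<close>, which is possible
  since \<open>\<Gamma>\<close> is divisible, turns conditions (a) and (c) for depth \<open>\<delta>\<close> into those for
  depth \<open>\<gamma>\<close>, and (b) survives because \<open>k \<le> 0\<close>.\<close>

lemma add_Fin_le_add_Fin_iff:
  fixes a b :: "'g::linordered_ab_group_add extg"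
  shows "a + Fin k \<le> b + Fin k \<longleftrightarrow> a \<le> b"
  by (cases a; cases b) auto

lemma add_Fin_eq_Infty_iff:
  fixes a :: "'g::linordered_ab_group_add extg"
  shows "a + Fin k = Infty \<longleftrightarrow> a = Infty"
  by (cases a) auto

lemma add_add_Fin_assoc:
  fixes a b :: "'g::linordered_ab_group_add extg"
  shows "a + (b + Fin k) = a + b + Fin k"
  by (cases a; cases b) (auto simp: algebra_simps)

lemma add_Fin_add_add_Fin:
  fixes a b :: "'g::linordered_ab_group_add extg"
  shows "a + Fin k + (b + Fin k) + Fin \<epsilon> = a + b + Fin (k + k + \<epsilon>)"
  by (cases a; cases b) (auto simp: algebra_simps)

lemma add_Fin_add_add_Fin_le:
  fixes a :: "'g::linordered_ab_group_add extg"
  assumes "k \<le> 0"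
  shows "a + Fin k + (a + Fin k) \<le> a + a"
  using assms by (cases a) (simp_all add: add_mono)

lemma min_add_Fin:
  fixes a b :: "'g::linordered_ab_group_add extg"
  shows "min (a + Fin k) (b + Fin k) = min a b + Fin k"
  by (simp add: min_def add_Fin_le_add_Fin_iff)

lemma Min_insert_Infty_add_Fin:
  fixes f :: "'b \<Rightarrow> 'g::linordered_ab_group_add extg"
  assumes "finite B"
  shows "Min (insert Infty (f ` B)) + Fin k = Min (insert Infty ((\<lambda>e. f e + Fin k) ` B))"
proof -
  have "mono (\<lambda>t::'g extg. t + Fin k)"
    by (rule monoI) (simp add: add_Fin_le_add_Fin_iff)
  then have "Min (insert Infty (f ` B)) + Fin k = Min ((\<lambda>t. t + Fin k) ` insert Infty (f ` B))"
    by (rule mono_Min_commute) (use assms in auto)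
  also have "(\<lambda>t. t + Fin k) ` insert Infty (f ` B) = insert Infty ((\<lambda>e. f e + Fin k) ` B)"
    by (auto simp: image_image)
  finally show ?thesis .
qed

lemma divisible_group_halve:
  fixes x :: "'g::ab_group_add"
  assumes "divisible_group TYPE('g)"
  obtains c where "c + c = x"
proof -
  obtain c :: 'g where "(\<Sum>i<(2::nat). c) = x"
    using assms unfolding divisible_group_def by (meson zero_less_numeral)
  then show ?thesis
    by (intro that) (simp add: numeral_2_eq_2)
qed

lemma v_norm_add_Fin:
  assumes "v_norm v scale \<alpha>"
  shows "v_norm v scale (\<lambda>x. \<alpha> x + Fin k)"
proof -
  obtain B where B: "is_basis scale B"
    and min_on_B: "\<And>c. \<alpha> (\<Sum>e\<in>B. scale (c e) e) = Min (insert Infty ((\<lambda>e. \<alpha> (scale (c e) e)) ` B))"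
    using assms unfolding v_norm_def by blast
  have "finite B"
    using B unfolding is_basis_def by simp
  then have "\<alpha> (\<Sum>e\<in>B. scale (c e) e) + Fin k
      = Min (insert Infty ((\<lambda>e. \<alpha> (scale (c e) e) + Fin k) ` B))" for c
    by (simp add: min_on_B Min_insert_Infty_add_Fin)
  moreover have "\<alpha> (x + y) + Fin k \<ge> min (\<alpha> x + Fin k) (\<alpha> y + Fin k)" for x y
    using assms unfolding v_norm_def min_add_Fin add_Fin_le_add_Fin_iff by blast
  moreover have "\<alpha> x + Fin k = Infty \<longleftrightarrow> x = 0" for x
    using assms by (simp add: v_norm_def add_Fin_eq_Infty_iff)
  moreover have "\<alpha> (scale a x) + Fin k = v a + (\<alpha> x + Fin k)" for a x
    using assms by (simp add: v_norm_def add_add_Fin_assoc)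
  ultimately show ?thesis
    unfolding v_norm_def using B by (intro conjI allI exI[of _ B]) simp_all
qed

lemma compatible_depth_add_Fin:
  assumes "compatible_depth v q \<alpha> \<delta>"
    and "k + k + \<gamma> = \<delta>"
    and "k \<le> 0"
  shows "compatible_depth v q (\<lambda>x. \<alpha> x + Fin k) \<gamma>"
proof -
  have "\<alpha> x + Fin k + (\<alpha> y + Fin k) + Fin \<gamma> = \<alpha> x + \<alpha> y + Fin \<delta>" for x y
    unfolding add_Fin_add_add_Fin assms(2) ..
  moreover have "v (q x) \<ge> \<alpha> x + Fin k + (\<alpha> x + Fin k)" for x
    using assms(1) add_Fin_add_add_Fin_le[OF assms(3), of "\<alpha> x"]
    unfolding compatible_depth_def by (blast intro: order_trans)
  ultimately show ?thesis
    using assms(1) unfolding compatible_depth_def by simp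
qed

theorem lemma4p7:
  fixes v :: "'a::field \<Rightarrow> 'g::linordered_ab_group_add extg"
    and scale :: "'a \<Rightarrow> 'v::ab_group_add \<Rightarrow> 'v"
    and q :: "'v \<Rightarrow> 'a"
    and \<alpha> :: "'v \<Rightarrow> 'g extg"
    and \<delta> \<gamma> :: 'g
  assumes "divisible_group TYPE('g)"
    and "valuation v"
    and "vector_space scale"
    and "finite_dim scale"
    and "quadratic_form scale q"
    and "v_norm v scale \<alpha>"
    and "compatible_depth v q \<alpha> \<delta>"
    and "0 \<le> \<delta>"
    and "\<delta> < \<gamma>"
  shows "\<exists>\<beta>. v_norm v scale \<beta> \<and> compatible_depth v q \<beta> \<gamma>"
proof -
  obtain k :: 'g where k: "k + k = \<delta> - \<gamma>"
    using assms(1) by (rule divisible_group_halve)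
  have "k \<le> 0"
  proof (rule ccontr)
    assume "\<not> k \<le> 0"
    then have "0 < k + k"
      by (simp add: add_pos_pos)
    with k assms(9) show False
      by simp
  qed
  moreover have "k + k + \<gamma> = \<delta>"
    using k by (simp add: algebra_simps)
  ultimately have "compatible_depth v q (\<lambda>x. \<alpha> x + Fin k) \<gamma>"
    by (intro compatible_depth_add_Fin[OF assms(7)])
  with v_norm_add_Fin[OF assms(6)] show ?thesis
    by blast
qed

end
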